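(* Assume (A1)–(A5) hold and let $\{u_k\}_{k\ge0}$ be the exact-data iteration defined below. Then $\{u_k\}_{k\ge0}$ converges to a solution $u^\dagger$ of $\mathcal F(u)=v$.
   Context: Spaces and operator. Let $\mathcal U=\mathbb R^N$ and $\mathcal V=\mathbb R^M$ carry the Euclidean inner product and norm. Let $\mathcal F:\mathcal D(\mathcal F)\subset\mathcal U\to\mathcal V$ be a (possibly nonlinear) operator, let $v\in\mathcal V$ be exact data, and let $\mathcal B_r(x)$ denote the closed ball of radius $r$ centred at $x$. Images and graph Laplacian. Elements of $\mathcal U$ are images on a pixel grid $\mathcal S=\{1,\dots,p\}\times\{1,\dots,q\}$ with $N=pq$. Fix $R\in(0,\infty)$, $\lambda>0$ and a metric $d$ on $\mathcal S$. For $u\in\mathcal U$, define $$(W_u)_{ab}=\mathbf 1_{(0,R]}(d(a,b))\exp(-|u(a)-u(b)|^2/\lambda),$$ let $D_u$ be the diagonal matrix of row sums of $W_u$, and set $\Delta_u=D_u-W_u$. Exact-data iteration. Let $\Psi:\mathcal V\to\mathcal U$ be a reconstruction map and set $u_0=\Psi(v)$. Define $$u_{k+1}=u_k-\alpha_k\mathcal F'(u_k)^*(\mathcal F(u_k)-v)-\beta_k\Delta_{u_k}u_k,$$ with $$\alpha_k=\min\Big\{\frac{\zeta_0\|\mathcal F(u_k)-v\|}{\|\mathcal F'(u_k)^*(\mathcal F(u_k)-v)\|},\zeta_1\Big\}.$$ If $\|\Delta_{u_k}u_k\|\ne0$, then $$\beta_k=\min\Big\{\frac{\nu_0\|\mathcal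 F(u_k)-v\|^2}{\|\Delta_{u_k}u_k\|},\frac{\nu_1}{\|\Delta_{u_k}u_k\|},\nu_2\Big\},$$ and otherwise $\beta_k=0$. Here $\zeta_0,\zeta_1,\nu_0,\nu_1,\nu_2>0$ are constants, and $\zeta>0$ is a constant with $\zeta\le\alpha_k$ for all $k$. Operator assumptions. There exist $\wp>0$, $B>0$, $\eta\in[0,1)$ and $L\ge0$ such that for all $u,w\in\mathcal B_{3\wp}(u_0)\subset\mathcal D(\mathcal F)$: - (A1) $\mathcal F$ is Fréchet differentiable with $u\mapsto\mathcal F'(u)$ continuous; - (A2) $\|\mathcal F'(u)\|\le B$; - (A3) $\|\mathcal F(u)-\mathcal F(w)-\mathcal F'(w)(u-w)\|\le\eta\|\mathcal F(u)-\mathcal F(w)\|$; - (A4) $\|\mathcal F'(u)-\mathcal F'(w)\|\le L\|u-w\|$; - (A5) there exists $u^\dagger\in\mathcal B_\wp(u_0)$ with $\mathcal F(u^\dagger)=v$. Standing parameter condition. Fix $\mathcal H>\frac{1+\eta}{1-\eta}$, and assume $$\zeta>\frac{\nu_0(\wp+\nu_1)+\zeta_0^2}{1-\eta-\frac{1+\eta}{\mathcal H}} .$$ *)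

theory Defs
  imports "HOL-Analysis.Analysis"
begin

text \<open>Images are vectors indexed by the pixel grid, modelled by a product
of two finite types.\<close>

definition graph_W ::
  "('i::finite \<Rightarrow> 'i \<Rightarrow> real) \<Rightarrow> real \<Rightarrow> real \<Rightarrow> real^'i \<Rightarrow> real^'i^'i" where
  "graph_W d R lam u =
     (\<chi> a b. (if 0 < d a b \<and> d a b \<le> R then 1 else 0) * exp (- ((abs (u$a - u$b)) ^ 2) / lam))"

definition graph_D ::
  "('i::finite \<Rightarrow> 'i \<Rightarrow> real) \<Rightarrow> real \<Rightarrow> real \<Rightarrow> real^'i \<Rightarrow> real^'i^'i" where
  "graph_D d R lam u =
     (\<chi> a b. if a = b then (\<Sum>c\<in>UNIV. graph_W d R lam u $ a $ c) else 0)"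

definition graph_Lap ::
  "('i::finite \<Rightarrow> 'i \<Rightarrow> real) \<Rightarrow> real \<Rightarrow> real \<Rightarrow> real^'i \<Rightarrow> real^'i^'i" where
  "graph_Lap d R lam u = graph_D d R lam u - graph_W d R lam u"

definition is_metric_on_grid :: "('i \<Rightarrow> 'i \<Rightarrow> real) \<Rightarrow> bool" where
  "is_metric_on_grid d \<longleftrightarrow>
     (\<forall>a b. 0 \<le> d a b) \<and> (\<forall>a b. d a b = 0 \<longleftrightarrow> a = b) \<and>
     (\<forall>a b. d a b = d b a) \<and> (\<forall>a b c. d a c \<le> d a b + d b c)"

end

theory Submission
  imports Defs
begin

text \<open>The tangential cone condition (A3) makes the Landweber direction
F'(u)* (F u - v) a descent direction for the distance to every solution
near u0, with gain (1 - \<eta>) |F u - v|^2. The step-size rules bound the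
gradient step by \<zeta>0 |F u - v| and the graph-Laplacian perturbation by
\<nu>0 |F u - v|^2 and by \<nu>1, so the parameter condition leaves a net gain
|u(k+1) - u_sol|^2 + \<delta> |F u(k) - v|^2 \<le> |u(k) - u_sol|^2 for the solution
u_sol of (A5). Hence the iterates stay in a ball and the squared residuals
are summable. A cluster point l of the iterates is a solution by continuity
of F, and the same one-step estimate relative to l shows that |u(k) - l|^2 is
quasi-Fejer monotone with summable errors; since a subsequence tends to 0,
so does the whole sequence.\<close>

lemma norm_diff_power2:
  fixes x y :: "'a::real_inner"
  shows "(norm (x - y))\<^sup>2 = (norm x)\<^sup>2 - 2 * (x \<bullet> y) + (norm y)\<^sup>2"
  using dot_norm_neg[of x y] by simp

lemma gradient_step_estimate:
  fixes e g :: "'a::real_inner"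
  assumes "0 \<le> a" and "a * norm g \<le> c * t" and "(1 - \<eta>) * t\<^sup>2 \<le> e \<bullet> g"
  shows "(norm (e - a *\<^sub>R g))\<^sup>2 \<le> (norm e)\<^sup>2 - (2 * a * (1 - \<eta>) - c\<^sup>2) * t\<^sup>2"
proof -
  have "(a * norm g)\<^sup>2 \<le> (c * t)\<^sup>2"
    using assms(1,2) by (intro power_mono) auto
  moreover have "a * ((1 - \<eta>) * t\<^sup>2) \<le> a * (e \<bullet> g)"
    using assms(1,3) by (rule mult_left_mono[rotated])
  ultimately show ?thesis
    by (simp add: norm_diff_power2 power_mult_distrib algebra_simps)
qed

lemma perturbed_gradient_step_estimate:
  fixes e g h :: "'a::real_inner"
  assumes "0 \<le> a" and "a * norm g \<le> c * t" and "(1 - \<eta>) * t\<^sup>2 \<le> e \<bullet> g"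
    and "c\<^sup>2 \<le> 2 * a * (1 - \<eta>)" and "norm h \<le> n0 * t\<^sup>2" and "norm h \<le> n1"
  shows "(norm (e - a *\<^sub>R g - h))\<^sup>2
           \<le> (norm e)\<^sup>2 - (2 * a * (1 - \<eta>) - c\<^sup>2 - 2 * norm e * n0 - n1 * n0) * t\<^sup>2"
proof -
  define w where "w = e - a *\<^sub>R g"
  have w_sq: "(norm w)\<^sup>2 \<le> (norm e)\<^sup>2 - (2 * a * (1 - \<eta>) - c\<^sup>2) * t\<^sup>2"
    unfolding w_def using assms(1-3) by (rule gradient_step_estimate)
  moreover have "0 \<le> (2 * a * (1 - \<eta>) - c\<^sup>2) * t\<^sup>2"
    using assms(4) by simp
  ultimately have "(norm w)\<^sup>2 \<le> (norm e)\<^sup>2"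
    by linarith
  then have "norm w \<le> norm e"
    by (rule power2_le_imp_le) simp
  then have "norm w * norm h \<le> norm e * (n0 * t\<^sup>2)"
    using assms(5) by (intro mult_mono) auto
  moreover have "norm h * norm h \<le> n1 * (n0 * t\<^sup>2)"
    using assms(5,6) order_trans[OF norm_ge_zero assms(6)] by (intro mult_mono) auto
  moreover have "norm (w - h) \<le> norm w + norm h"
    by (rule norm_triangle_ineq4)
  then have "(norm (w - h))\<^sup>2 \<le> (norm w + norm h)\<^sup>2"
    by (simp add: power_mono)
  ultimately show ?thesis
    using w_sq unfolding w_def[symmetric] by (simp add: power2_eq_square algebra_simps)
qed

lemma inner_ge_of_norm_diff_le:
  fixes p r :: "'a::real_inner"
  assumes "norm (p - r) \<le> \<eta> * norm r"
  shows "(1 - \<eta>) * (norm r)\<^sup>2 \<le> p \<bullet> r"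
proof -
  have "- ((p - r) \<bullet> r) \<le> \<eta> * norm r * norm r"
    using Cauchy_Schwarz_ineq2[of "p - r" r] mult_right_mono[OF assms norm_ge_zero[of r]] by linarith
  then show ?thesis
    by (simp add: inner_diff_left power2_norm_eq_inner[symmetric] power2_eq_square algebra_simps)
qed

lemma tangential_cone_descent:
  fixes F :: "'a::euclidean_space \<Rightarrow> 'b::euclidean_space" and A :: "'a \<Rightarrow>\<^sub>L 'b"
  assumes "norm (F s - F x - A (s - x)) \<le> \<eta> * norm (F s - F x)"
  shows "(1 - \<eta>) * (norm (F x - F s))\<^sup>2 \<le> (x - s) \<bullet> adjoint A (F x - F s)"
proof -
  have "norm (A (x - s) - (F x - F s)) \<le> \<eta> * norm (F x - F s)"
    using assms by (simp add: blinfun.diff_right norm_minus_commute algebra_simps)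
  then have "(1 - \<eta>) * (norm (F x - F s))\<^sup>2 \<le> A (x - s) \<bullet> (F x - F s)"
    by (rule inner_ge_of_norm_diff_le)
  then show ?thesis
    by (simp add: adjoint_works blinfun.bounded_linear_right bounded_linear.linear)
qed

lemma summable_of_decrements:
  fixes f E :: "nat \<Rightarrow> real"
  assumes "\<And>k. 0 \<le> f k" and "\<And>k. E (Suc k) + f k \<le> E k" and "\<And>k. 0 \<le> E k"
  shows "summable f"
proof (rule summableI_nonneg_bounded)
  fix n
  have "(\<Sum>i<n. f i) \<le> E 0 - E n"
  proof (induction n)
    case (Suc n)
    then show ?case using assms(2)[of n] by simp
  qed simp
  then show "(\<Sum>i<n. f i) \<le> E 0"
    using assms(3)[of n] by linarith
qed (fact assms(1))

lemma quasi_fejer_tendsto: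
  fixes u :: "nat \<Rightarrow> 'a::metric_space"
  assumes step: "\<And>k. (dist (u (Suc k)) l)\<^sup>2 \<le> (dist (u k) l)\<^sup>2 + e k"
    and e_nonneg: "\<And>k. 0 \<le> e k" and e_summable: "summable e"
    and \<sigma>: "strict_mono \<sigma>" and cluster: "(u \<circ> \<sigma>) \<longlonglongrightarrow> l"
  shows "u \<longlonglongrightarrow> l"
proof -
  define a where "a k = (dist (u k) l)\<^sup>2" for k
  define b where "b k = a k - (\<Sum>i<k. e i)" for k
  have "decseq b"
    unfolding decseq_Suc_iff b_def a_def using step by (simp add: algebra_simps)
  moreover have "- suminf e \<le> b k" for k
  proof -
    have "(\<Sum>i<k. e i) \<le> suminf e"
      by (rule sum_le_suminf[OF e_summable]) (simp_all add: e_nonneg)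
    then show ?thesis
      unfolding b_def a_def using zero_le_power2[of "dist (u k) l"] by linarith
  qed
  ultimately obtain \<beta> where "b \<longlonglongrightarrow> \<beta>"
    using decseq_convergent by blast
  then have "(\<lambda>k. b k + (\<Sum>i<k. e i)) \<longlonglongrightarrow> \<beta> + suminf e"
    using summable_LIMSEQ[OF e_summable] by (rule tendsto_add)
  then have a_lim: "a \<longlonglongrightarrow> \<beta> + suminf e"
    unfolding b_def by simp
  have "(\<lambda>j. dist ((u \<circ> \<sigma>) j) l) \<longlonglongrightarrow> 0"
    using cluster by (rule tendsto_dist_iff[THEN iffD1])
  then have "(\<lambda>j. (dist ((u \<circ> \<sigma>) j) l)\<^sup>2) \<longlonglongrightarrow> 0\<^sup>2"
    by (rule tendsto_power)
  then have "(a \<circ> \<sigma>) \<longlonglongrightarrow> 0"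
    by (simp add: a_def comp_def)
  moreover have "(a \<circ> \<sigma>) \<longlonglongrightarrow> \<beta> + suminf e"
    using a_lim \<sigma> by (rule LIMSEQ_subseq_LIMSEQ)
  ultimately have "\<beta> + suminf e = 0"
    by (rule LIMSEQ_unique[symmetric])
  then have "a \<longlonglongrightarrow> 0"
    using a_lim by simp
  then have "(\<lambda>k. sqrt (a k)) \<longlonglongrightarrow> sqrt 0"
    by (rule tendsto_real_sqrt)
  then have "(\<lambda>k. dist (u k) l) \<longlonglongrightarrow> 0"
    by (simp add: a_def)
  then show ?thesis
    by (rule tendsto_dist_iff[THEN iffD2])
qed

text \<open>An abstract form of the iteration: g k stands for
F'(u k)* (F (u k) - v) and h k for the graph-Laplacian term
beta k * Lap(u k) u k; descent_direction is what the tangential cone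
condition (A3) provides on the ball around the solution u_sol.\<close>

locale perturbed_landweber_iteration =
  fixes F :: "'a::euclidean_space \<Rightarrow> 'b::real_normed_vector" and v :: 'b
    and u g h :: "nat \<Rightarrow> 'a" and \<alpha> :: "nat \<Rightarrow> real"
    and u_sol :: 'a and \<rho> \<eta> \<zeta> \<zeta>\<^sub>0 \<nu>\<^sub>0 \<nu>\<^sub>1 :: real
  assumes iteration: "u (Suc k) = u k - \<alpha> k *\<^sub>R g k - h k"
    and step_size_lower: "\<zeta> \<le> \<alpha> k"
    and step_size_upper: "\<alpha> k * norm (g k) \<le> \<zeta>\<^sub>0 * norm (F (u k) - v)"
    and perturbation_le_residual: "norm (h k) \<le> \<nu>\<^sub>0 * (norm (F (u k) - v))\<^sup>2"
    and perturbation_bounded: "norm (h k) \<le> \<nu>\<^sub>1"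
    and descent_direction: "u k \<in> cball u_sol \<rho> \<Longrightarrow> s \<in> cball u_sol \<rho> \<Longrightarrow> F s = v \<Longrightarrow>
                              (1 - \<eta>) * (norm (F (u k) - v))\<^sup>2 \<le> (u k - s) \<bullet> g k"
    and continuous_on_ball: "continuous_on (cball u_sol \<rho>) F"
    and solution: "F u_sol = v"
    and start: "u 0 \<in> cball u_sol \<rho>"
    and parameters: "\<nu>\<^sub>0 * (\<rho> + \<nu>\<^sub>1) + \<zeta>\<^sub>0\<^sup>2 < \<zeta> * (1 - \<eta>)" "0 \<le> \<nu>\<^sub>0" "\<eta> < 1"
begin

abbreviation residual :: "nat \<Rightarrow> 'b" where
  "residual k \<equiv> F (u k) - v"

lemma radius_nonneg: "0 \<le> \<rho>"
  using start by (auto intro: order_trans[OF zero_le_dist])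

lemma nu1_nonneg: "0 \<le> \<nu>\<^sub>1"
  using order_trans[OF norm_ge_zero perturbation_bounded] .

lemma parameters_step_size: "\<nu>\<^sub>0 * (\<rho> + \<nu>\<^sub>1) + \<zeta>\<^sub>0\<^sup>2 < \<alpha> k * (1 - \<eta>)"
  using parameters mult_right_mono[OF step_size_lower, of "1 - \<eta>" k] by linarith

lemma step_size_nonneg: "0 \<le> \<alpha> k"
proof -
  have "0 \<le> \<nu>\<^sub>0 * (\<rho> + \<nu>\<^sub>1) + \<zeta>\<^sub>0\<^sup>2"
    using parameters(2) radius_nonneg nu1_nonneg by simp
  then have "0 < \<alpha> k * (1 - \<eta>)"
    using parameters_step_size[of k] by linarith
  then show ?thesis
    using parameters(3) by (simp add: zero_less_mult_iff)
qed

definition descent_rate :: real where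
  "descent_rate = 2 * \<zeta> * (1 - \<eta>) - \<zeta>\<^sub>0\<^sup>2 - 2 * \<rho> * \<nu>\<^sub>0 - \<nu>\<^sub>1 * \<nu>\<^sub>0"

lemma step_size_margin: "\<zeta>\<^sub>0\<^sup>2 \<le> 2 * \<alpha> k * (1 - \<eta>)"
proof -
  have "0 \<le> \<nu>\<^sub>0 * (\<rho> + \<nu>\<^sub>1)"
    using parameters(2) radius_nonneg nu1_nonneg by simp
  moreover have "2 * \<alpha> k * (1 - \<eta>) = 2 * (\<alpha> k * (1 - \<eta>))"
    by simp
  ultimately show ?thesis
    using parameters_step_size[of k] zero_le_power2[of \<zeta>\<^sub>0] by linarith
qed

lemma descent_rate_pos: "0 < descent_rate"
proof -
  have "0 < 2 * (\<zeta> * (1 - \<eta>) - \<nu>\<^sub>0 * (\<rho> + \<nu>\<^sub>1) - \<zeta>\<^sub>0\<^sup>2)"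
    using parameters(1) by simp
  moreover have "0 \<le> \<zeta>\<^sub>0\<^sup>2 + \<nu>\<^sub>1 * \<nu>\<^sub>0"
    using nu1_nonneg parameters(2) by simp
  ultimately have "0 < 2 * (\<zeta> * (1 - \<eta>) - \<nu>\<^sub>0 * (\<rho> + \<nu>\<^sub>1) - \<zeta>\<^sub>0\<^sup>2) + (\<zeta>\<^sub>0\<^sup>2 + \<nu>\<^sub>1 * \<nu>\<^sub>0)"
    by (rule add_pos_nonneg)
  also have "\<dots> = descent_rate"
    unfolding descent_rate_def by (simp add: algebra_simps)
  finally show ?thesis .
qed

lemma distance_step:
  assumes "u k \<in> cball u_sol \<rho>" and "s \<in> cball u_sol \<rho>" and "F s = v"
  shows "(norm (u (Suc k) - s))\<^sup>2 \<le> (norm (u k - s))\<^sup>2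
           - (2 * \<alpha> k * (1 - \<eta>) - \<zeta>\<^sub>0\<^sup>2 - 2 * norm (u k - s) * \<nu>\<^sub>0 - \<nu>\<^sub>1 * \<nu>\<^sub>0) * (norm (residual k))\<^sup>2"
proof -
  have "u (Suc k) - s = (u k - s) - \<alpha> k *\<^sub>R g k - h k"
    using iteration by (simp add: algebra_simps)
  then show ?thesis
    using perturbed_gradient_step_estimate[OF step_size_nonneg step_size_upper
        descent_direction[OF assms] step_size_margin perturbation_le_residual perturbation_bounded]
    by (simp only:)
qed

lemma fejer_step:
  assumes "u k \<in> cball u_sol \<rho>"
  shows "(norm (u (Suc k) - u_sol))\<^sup>2 + descent_rate * (norm (residual k))\<^sup>2 \<le> (norm (u k - u_sol))\<^sup>2"
proof -
  have "norm (u k - u_sol) \<le> \<rho>"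
    using assms by (simp add: dist_norm norm_minus_commute)
  then have "descent_rate \<le> 2 * \<alpha> k * (1 - \<eta>) - \<zeta>\<^sub>0\<^sup>2 - 2 * norm (u k - u_sol) * \<nu>\<^sub>0 - \<nu>\<^sub>1 * \<nu>\<^sub>0"
    unfolding descent_rate_def using mult_right_mono[OF step_size_lower, of "1 - \<eta>" k] parameters
      mult_right_mono[of "norm (u k - u_sol)" \<rho> \<nu>\<^sub>0] by linarith
  then have "descent_rate * (norm (residual k))\<^sup>2
      \<le> (2 * \<alpha> k * (1 - \<eta>) - \<zeta>\<^sub>0\<^sup>2 - 2 * norm (u k - u_sol) * \<nu>\<^sub>0 - \<nu>\<^sub>1 * \<nu>\<^sub>0) * (norm (residual k))\<^sup>2"
    by (rule mult_right_mono) simp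
  moreover have "u_sol \<in> cball u_sol \<rho>"
    using radius_nonneg by simp
  ultimately show ?thesis
    using distance_step[OF assms _ solution] by fastforce
qed

lemma iterates_in_ball: "u k \<in> cball u_sol \<rho>"
proof (induction k)
  case 0
  show ?case by (fact start)
next
  case (Suc k)
  have "0 \<le> descent_rate * (norm (residual k))\<^sup>2"
    using descent_rate_pos by simp
  then have "(norm (u (Suc k) - u_sol))\<^sup>2 \<le> (norm (u k - u_sol))\<^sup>2"
    using fejer_step[OF Suc] by linarith
  then have "norm (u (Suc k) - u_sol) \<le> norm (u k - u_sol)"
    by (rule power2_le_imp_le) simp
  with Suc show ?case
    by (simp add: dist_norm norm_minus_commute)
qed

lemma residual_power2_summable: "summable (\<lambda>k. (norm (residual k))\<^sup>2)"
proof -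
  have "summable (\<lambda>k. descent_rate * (norm (residual k))\<^sup>2)"
    using descent_rate_pos fejer_step[OF iterates_in_ball]
    by (intro summable_of_decrements[where E = "\<lambda>k. (norm (u k - u_sol))\<^sup>2"]) simp_all
  then show ?thesis
    using descent_rate_pos by simp
qed

lemma residual_tendsto_zero: "(\<lambda>k. F (u k)) \<longlonglongrightarrow> v"
proof -
  have "(\<lambda>k. sqrt ((norm (residual k))\<^sup>2)) \<longlonglongrightarrow> sqrt 0"
    using summable_LIMSEQ_zero[OF residual_power2_summable] by (rule tendsto_real_sqrt)
  then show ?thesis
    by (simp add: LIM_zero_iff tendsto_norm_zero_iff)
qed

lemma cluster_point_solution:
  obtains l \<sigma> where "l \<in> cball u_sol \<rho>" "F l = v" "strict_mono \<sigma>" "(u \<circ> \<sigma>) \<longlonglongrightarrow> l"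
proof -
  have "\<forall>k. u k \<in> cball u_sol \<rho>"
    using iterates_in_ball by blast
  then obtain l \<sigma> where l: "l \<in> cball u_sol \<rho>" and \<sigma>: "strict_mono \<sigma>" and lim: "(u \<circ> \<sigma>) \<longlonglongrightarrow> l"
    by (rule seq_compactE[OF compact_imp_seq_compact[OF compact_cball]])
  have "(\<lambda>j. F ((u \<circ> \<sigma>) j)) \<longlonglongrightarrow> F l"
    by (rule continuous_on_tendsto_compose[OF continuous_on_ball lim l]) (use iterates_in_ball in simp)
  moreover have "(\<lambda>j. F ((u \<circ> \<sigma>) j)) \<longlonglongrightarrow> v"
    using LIMSEQ_subseq_LIMSEQ[OF residual_tendsto_zero \<sigma>] by (simp add: comp_def)
  ultimately have "F l = v"
    by (rule LIMSEQ_unique)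
  with l \<sigma> lim that show ?thesis
    by blast
qed

lemma quasi_fejer_step:
  assumes "l \<in> cball u_sol \<rho>" and "F l = v"
  shows "(norm (u (Suc k) - l))\<^sup>2 \<le> (norm (u k - l))\<^sup>2 + (4 * \<rho> * \<nu>\<^sub>0 + \<nu>\<^sub>1 * \<nu>\<^sub>0) * (norm (residual k))\<^sup>2"
proof -
  have "norm (u k - l) \<le> 2 * \<rho>"
    using iterates_in_ball[of k] assms(1) dist_triangle3[of "u k" l u_sol] by (simp add: dist_norm)
  then have "- (2 * \<alpha> k * (1 - \<eta>) - \<zeta>\<^sub>0\<^sup>2 - 2 * norm (u k - l) * \<nu>\<^sub>0 - \<nu>\<^sub>1 * \<nu>\<^sub>0)
      \<le> 4 * \<rho> * \<nu>\<^sub>0 + \<nu>\<^sub>1 * \<nu>\<^sub>0"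
    using step_size_margin[of k] mult_right_mono[of "norm (u k - l)" "2 * \<rho>" \<nu>\<^sub>0] parameters(2)
    by linarith
  then have "- (2 * \<alpha> k * (1 - \<eta>) - \<zeta>\<^sub>0\<^sup>2 - 2 * norm (u k - l) * \<nu>\<^sub>0 - \<nu>\<^sub>1 * \<nu>\<^sub>0) * (norm (residual k))\<^sup>2
      \<le> (4 * \<rho> * \<nu>\<^sub>0 + \<nu>\<^sub>1 * \<nu>\<^sub>0) * (norm (residual k))\<^sup>2"
    by (rule mult_right_mono) simp
  then show ?thesis
    using distance_step[OF iterates_in_ball[of k] assms] by linarith
qed

theorem iterates_converge_to_solution: "\<exists>l\<in>cball u_sol \<rho>. F l = v \<and> u \<longlonglongrightarrow> l"
proof -
  obtain l \<sigma> where l: "l \<in> cball u_sol \<rho>" "F l = v" and \<sigma>: "strict_mono \<sigma>" "(u \<circ> \<sigma>) \<longlonglongrightarrow> l"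
    by (rule cluster_point_solution)
  define C where "C = 4 * \<rho> * \<nu>\<^sub>0 + \<nu>\<^sub>1 * \<nu>\<^sub>0"
  have "0 \<le> C"
    unfolding C_def using radius_nonneg nu1_nonneg parameters(2) by simp
  then have nonneg: "0 \<le> C * (norm (residual k))\<^sup>2" for k
    by simp
  have summable: "summable (\<lambda>k. C * (norm (residual k))\<^sup>2)"
    using residual_power2_summable by (rule summable_mult)
  have step: "(dist (u (Suc k)) l)\<^sup>2 \<le> (dist (u k) l)\<^sup>2 + C * (norm (residual k))\<^sup>2" for k
    unfolding C_def dist_norm by (rule quasi_fejer_step[OF l])
  have "u \<longlonglongrightarrow> l"
    by (rule quasi_fejer_tendsto[OF step nonneg summable \<sigma>])
  with l show ?thesis
    by blast
qed

end

lemma min_quotient_mult_le: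
  fixes c n b :: real
  assumes "0 \<le> n" and "0 \<le> c"
  shows "min (c / n) b * n \<le> c"
proof (cases "n = 0")
  case False
  then have "min (c / n) b * n \<le> c / n * n"
    using assms(1) by (intro mult_right_mono) auto
  with False show ?thesis
    by simp
qed (use assms in simp)

lemma norm_capped_scaleR_le:
  fixes x :: "'a::real_normed_vector"
  assumes "0 \<le> a" and "0 \<le> b" and "0 \<le> c"
  defines "\<beta> \<equiv> if norm x \<noteq> 0 then min (min (a / norm x) (b / norm x)) c else 0"
  shows "norm (\<beta> *\<^sub>R x) \<le> a" and "norm (\<beta> *\<^sub>R x) \<le> b"
proof -
  have "norm (\<beta> *\<^sub>R x) \<le> a \<and> norm (\<beta> *\<^sub>R x) \<le> b"
  proof (cases "norm x = 0")
    case False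
    then have "\<beta> * norm x \<le> a / norm x * norm x" "\<beta> * norm x \<le> b / norm x * norm x"
      unfolding \<beta>_def by (intro mult_right_mono; simp)+
    moreover have "0 \<le> \<beta>"
      unfolding \<beta>_def using assms(1-3) by simp
    ultimately show ?thesis
      using False by simp
  qed (use assms in simp)
  then show "norm (\<beta> *\<^sub>R x) \<le> a" and "norm (\<beta> *\<^sub>R x) \<le> b"
    by simp_all
qed

lemma parameter_condition_margin:
  fixes \<eta> \<zeta> H X :: real
  assumes "0 \<le> \<eta>" and "\<eta> < 1" and "0 < \<zeta>" and "(1 + \<eta>) / (1 - \<eta>) < H"
    and "X / (1 - \<eta> - (1 + \<eta>) / H) < \<zeta>"
  shows "X < \<zeta> * (1 - \<eta>)"
proof -
  have "0 < (1 + \<eta>) / (1 - \<eta>)"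
    using assms(1,2) by simp
  then have "0 < H"
    using assms(4) by linarith
  then have "(1 + \<eta>) / H < 1 - \<eta>" and "0 \<le> (1 + \<eta>) / H"
    using assms(1,2,4) by (simp_all add: divide_less_eq mult.commute)
  then have "X < \<zeta> * (1 - \<eta> - (1 + \<eta>) / H)"
    using assms(5) by (simp add: divide_less_eq mult.commute)
  also have "\<dots> \<le> \<zeta> * (1 - \<eta>)"
    using assms(3) \<open>0 \<le> (1 + \<eta>) / H\<close> by simp
  finally show ?thesis .
qed

theorem mainTheorem4:
  fixes F :: "real^('p::finite \<times> 'q::finite) \<Rightarrow> real^'m::finite"
    and F' :: "real^('p \<times> 'q) \<Rightarrow> ((real^('p \<times> 'q)) \<Rightarrow>\<^sub>L (real^'m))"
    and DF :: "(real^('p \<times> 'q)) set"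
    and v :: "real^'m"
    and \<Psi> :: "real^'m \<Rightarrow> real^('p \<times> 'q)"
    and d :: "'p \<times> 'q \<Rightarrow> 'p \<times> 'q \<Rightarrow> real"
    and R lam :: real
    and u :: "nat \<Rightarrow> real^('p \<times> 'q)"
    and alpha beta :: "nat \<Rightarrow> real"
    and \<zeta>0 \<zeta>1 \<nu>0 \<nu>1 \<nu>2 \<zeta> :: real
    and rho B \<eta> L H :: real
  assumes R_pos: "0 < R" and lam_pos: "0 < lam"
    and d_metric: "is_metric_on_grid d"
    and u0: "u 0 = \<Psi> v"
    and iter: "\<forall>k. u (Suc k) = u k - alpha k *\<^sub>R adjoint (blinfun_apply (F' (u k))) (F (u k) - v)
                                    - beta k *\<^sub>R (graph_Lap d R lam (u k) *v u k)"
    and alpha_def: "\<forall>k. alpha k = min (\<zeta>0 * norm (F (u k) - v)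
                                         / norm (adjoint (blinfun_apply (F' (u k))) (F (u k) - v))) \<zeta>1"
    and beta_def: "\<forall>k. beta k =
         (if norm (graph_Lap d R lam (u k) *v u k) \<noteq> 0
          then min (min (\<nu>0 * (norm (F (u k) - v))^2 / norm (graph_Lap d R lam (u k) *v u k))
                        (\<nu>1 / norm (graph_Lap d R lam (u k) *v u k))) \<nu>2
          else 0)"
    and consts_pos: "0 < \<zeta>0" "0 < \<zeta>1" "0 < \<nu>0" "0 < \<nu>1" "0 < \<nu>2" "0 < \<zeta>"
    and zeta_le: "\<forall>k. \<zeta> \<le> alpha k"
    and wp_pos: "0 < rho" and B_pos: "0 < B" and eta: "0 \<le> \<eta>" "\<eta> < 1" and L_nonneg: "0 \<le> L"
    and dom: "cball (u 0) (3 * rho) \<subseteq> DF"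
    and A1_deriv: "\<forall>w\<in>cball (u 0) (3 * rho). (F has_derivative blinfun_apply (F' w)) (at w within DF)"
    and A1_cont: "continuous_on (cball (u 0) (3 * rho)) F'"
    and A2: "\<forall>w\<in>cball (u 0) (3 * rho). norm (F' w) \<le> B"
    and A3: "\<forall>x\<in>cball (u 0) (3 * rho). \<forall>w\<in>cball (u 0) (3 * rho).
               norm (F x - F w - blinfun_apply (F' w) (x - w)) \<le> \<eta> * norm (F x - F w)"
    and A4: "\<forall>x\<in>cball (u 0) (3 * rho). \<forall>w\<in>cball (u 0) (3 * rho).
               norm (F' x - F' w) \<le> L * norm (x - w)"
    and A5: "\<exists>us\<in>cball (u 0) rho. F us = v"
    and H_gt: "H > (1 + \<eta>) / (1 - \<eta>)"
    and param: "\<zeta> > (\<nu>0 * (rho + \<nu>1) + \<zeta>0^2) / (1 - \<eta> - (1 + \<eta>) / H)"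
  shows "\<exists>ud. ud \<in> DF \<and> F ud = v \<and> u \<longlonglongrightarrow> ud"
proof -
  obtain us where us: "us \<in> cball (u 0) rho" "F us = v"
    using A5 by blast
  have ball_sub: "cball us rho \<subseteq> cball (u 0) (3 * rho)"
    using us(1) wp_pos by (simp add: cball_subset_cball_iff dist_commute)
  have continuous: "continuous_on (cball us rho) F"
    by (rule has_derivative_continuous_on[of _ F "\<lambda>w. blinfun_apply (F' w)"])
      (use A1_deriv ball_sub dom in \<open>blast intro: has_derivative_subset\<close>)
  have descent: "(1 - \<eta>) * (norm (F x - v))\<^sup>2 \<le> (x - s) \<bullet> adjoint (F' x) (F x - v)"
    if "x \<in> cball us rho" and "s \<in> cball us rho" and "F s = v" for x s
  proof -
    have "norm (F s - F x - F' x (s - x)) \<le> \<eta> * norm (F s - F x)"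
      using A3 ball_sub that(1,2) by blast
    then show ?thesis
      using tangential_cone_descent[of F s x "F' x" \<eta>] that(3) by simp
  qed
  have alpha_upper: "alpha k * norm (adjoint (F' (u k)) (F (u k) - v)) \<le> \<zeta>0 * norm (F (u k) - v)" for k
    unfolding alpha_def[rule_format] using consts_pos(1) by (intro min_quotient_mult_le) simp_all
  have beta_upper: "norm (beta k *\<^sub>R (graph_Lap d R lam (u k) *v u k)) \<le> \<nu>0 * (norm (F (u k) - v))\<^sup>2"
    and beta_bounded: "norm (beta k *\<^sub>R (graph_Lap d R lam (u k) *v u k)) \<le> \<nu>1" for k
    unfolding beta_def[rule_format] using consts_pos(3-5) by (intro norm_capped_scaleR_le; simp)+
  have margin: "\<nu>0 * (rho + \<nu>1) + \<zeta>0\<^sup>2 < \<zeta> * (1 - \<eta>)"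
    using eta consts_pos(6) H_gt param by (rule parameter_condition_margin)
  have "perturbed_landweber_iteration F v u (\<lambda>k. adjoint (F' (u k)) (F (u k) - v))
      (\<lambda>k. beta k *\<^sub>R (graph_Lap d R lam (u k) *v u k)) alpha us rho \<eta> \<zeta> \<zeta>0 \<nu>0 \<nu>1"
    by unfold_locales
      (use iter zeta_le alpha_upper beta_upper beta_bounded descent continuous us margin consts_pos eta
        in \<open>simp_all add: dist_commute\<close>)
  then obtain l where "l \<in> cball us rho" "F l = v" "u \<longlonglongrightarrow> l"
    using perturbed_landweber_iteration.iterates_converge_to_solution by blast
  with ball_sub dom show ?thesis
    by blast
qed

end
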